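(* In the finite-sum strongly monotone setting below, for any $0<\alpha\le\mu/(5nl^2)$ and $K\ge1$, the iterates of both PPM-RR and PPM-SO are well defined and satisfy $$\mathbb{E}\|\mathbf{z}^{K+1}_0-\mathbf{z}^*\|^2\le 2e^{-n\alpha\mu K}\|\mathbf{z}_0-\mathbf{z}^*\|^2+\frac{l^2\sigma_*^2\alpha^3n^2K}{\mu}.$$ Moreover, if $\|\nu(\mathbf{z}_0)\|n^{1/2}K/\mu>1$ and $\alpha=\min\{\mu/(5nl^2),\,2\log(\|\nu(\mathbf{z}_0)\|n^{1/2}K/\mu)/(\mu nK)\}$, then for both PPM-RR and PPM-SO $$\mathbb{E}\|\mathbf{z}^{K+1}_0-\mathbf{z}^*\|^2\le 2e^{-K/(5\kappa^2)}\|\mathbf{z}_0-\mathbf{z}^*\|^2+\frac{2\mu^2+8\kappa^2\sigma_*^2\log^3(\|\nu(\mathbf{z}_0)\|n^{1/2}K/\mu)}{\mu^2nK^2}.$$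
   Context: Setting: $n\ge1$; $\omega_1,\dots,\omega_n:\mathbb{R}^d\to\mathbb{R}^d$ are each $l$-Lipschitz (not necessarily monotone), and $\nu=\frac1n\sum_{i=1}^n\omega_i$ is $\mu$-strongly monotone ($\langle\nu(\mathbf{z}_1)-\nu(\mathbf{z}_2),\mathbf{z}_1-\mathbf{z}_2\rangle\ge\mu\|\mathbf{z}_1-\mathbf{z}_2\|^2$), with unique root $\mathbf{z}^*$. $\kappa=l/\mu$ and $\sigma_*^2=\frac1n\sum_{i=1}^n\|\omega_i(\mathbf{z}^* )\|^2$. Proximal point method without replacement: $\mathbf{z}^1_0=\mathbf{z}_0$; for each epoch $k=1,\dots,K$ with a permutation $\tau_k$ of $[n]$, $\mathbf{z}^k_i$ is the solution of the implicit equation $\mathbf{z}^k_i=\mathbf{z}^k_{i-1}-\alpha\,\omega_{\tau_k(i)}(\mathbf{z}^k_i)$ for $i=1,\dots,n$, and $\mathbf{z}^{k+1}_0=\mathbf{z}^k_n$. In PPM-RR, $\tau_1,\dots,\tau_K$ are independent uniformly random permutations; in PPM-SO a single uniformly random permutation $\tau$ is drawn and $\tau_k=\tau$ for all $k$. Expectations are over the permutations. *)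

theory Defs
  imports "HOL-Analysis.Analysis" "HOL-Combinatorics.Permutations"
begin

text \<open>Operators are indexed 0..n-1; permutations are permutations of {0..<n}.\<close>

definition nu :: "nat \<Rightarrow> (nat \<Rightarrow> 'a::real_vector \<Rightarrow> 'a) \<Rightarrow> 'a \<Rightarrow> 'a" where
  "nu n \<omega> z = (1 / real n) *\<^sub>R (\<Sum>i<n. \<omega> i z)"

definition strongly_monotone :: "real \<Rightarrow> ('a::real_inner \<Rightarrow> 'a) \<Rightarrow> bool" where
  "strongly_monotone \<mu> F \<longleftrightarrow> (\<forall>z1 z2. inner (F z1 - F z2) (z1 - z2) \<ge> \<mu> * (norm (z1 - z2))\<^sup>2)"

definition sigma_star_sq :: "nat \<Rightarrow> (nat \<Rightarrow> 'a::real_normed_vector \<Rightarrow> 'a) \<Rightarrow> 'a \<Rightarrow> real" where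
  "sigma_star_sq n \<omega> zs = (1 / real n) * (\<Sum>i<n. (norm (\<omega> i zs))\<^sup>2)"

definition prox_step :: "real \<Rightarrow> ('a::real_vector \<Rightarrow> 'a) \<Rightarrow> 'a \<Rightarrow> 'a" where
  "prox_step \<alpha> F x = (THE z. z = x - \<alpha> *\<^sub>R F z)"

definition prox_well_defined :: "nat \<Rightarrow> real \<Rightarrow> (nat \<Rightarrow> 'a::real_vector \<Rightarrow> 'a) \<Rightarrow> bool" where
  "prox_well_defined n \<alpha> \<omega> \<longleftrightarrow> (\<forall>j<n. \<forall>x. \<exists>!z. z = x - \<alpha> *\<^sub>R \<omega> j z)"

text \<open>One epoch with permutation p: z_i = prox(z_{i-1}) using omega_{p(i-1)}, i = 1..n.\<close>
definition ppm_epoch :: "nat \<Rightarrow> real \<Rightarrow> (nat \<Rightarrow> 'a::real_vector \<Rightarrow> 'a) \<Rightarrow> (nat \<Rightarrow> nat) \<Rightarrow> 'a \<Rightarrow> 'a" where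
  "ppm_epoch n \<alpha> \<omega> p z = foldl (\<lambda>x i. prox_step \<alpha> (\<omega> (p i)) x) z [0..<n]"

text \<open>ppm_run ... tau k z0 = z^{k+1}_0, epoch k uses permutation tau k (k = 1..K).\<close>
fun ppm_run :: "nat \<Rightarrow> real \<Rightarrow> (nat \<Rightarrow> 'a::real_vector \<Rightarrow> 'a) \<Rightarrow> (nat \<Rightarrow> nat \<Rightarrow> nat) \<Rightarrow> nat \<Rightarrow> 'a \<Rightarrow> 'a" where
  "ppm_run n \<alpha> \<omega> \<tau> 0 z0 = z0"
| "ppm_run n \<alpha> \<omega> \<tau> (Suc k) z0 = ppm_epoch n \<alpha> \<omega> (\<tau> (Suc k)) (ppm_run n \<alpha> \<omega> \<tau> k z0)"

definition perms :: "nat \<Rightarrow> (nat \<Rightarrow> nat) set" where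
  "perms n = {p. p permutes {0..<n}}"

text \<open>PPM-RR: expectation over K independent uniform permutations tau 1..tau K.\<close>
definition E_RR :: "nat \<Rightarrow> real \<Rightarrow> (nat \<Rightarrow> 'a::real_normed_vector \<Rightarrow> 'a) \<Rightarrow> nat \<Rightarrow> 'a \<Rightarrow> 'a \<Rightarrow> real" where
  "E_RR n \<alpha> \<omega> K z0 zs =
     (\<Sum>\<tau>\<in>PiE {1..K} (\<lambda>_. perms n). (norm (ppm_run n \<alpha> \<omega> \<tau> K z0 - zs))\<^sup>2)
       / real (card (PiE {1..K} (\<lambda>_. perms n)))"

text \<open>PPM-SO: a single uniform permutation used in every epoch.\<close>
definition E_SO :: "nat \<Rightarrow> real \<Rightarrow> (nat \<Rightarrow> 'a::real_normed_vector \<Rightarrow> 'a) \<Rightarrow> nat \<Rightarrow> 'a \<Rightarrow> 'a \<Rightarrow> real" where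
  "E_SO n \<alpha> \<omega> K z0 zs =
     (\<Sum>p\<in>perms n. (norm (ppm_run n \<alpha> \<omega> (\<lambda>_. p) K z0 - zs))\<^sup>2) / real (card (perms n))"

end

theory Submission
  imports Defs
begin

text \<open>
  An epoch moves z to z_n = z - \<alpha> \<Sum>_i \<omega>_p(i)(z_(i+1)). Evaluating every operator at the end point
  instead gives z - z_n = \<alpha> n \<nu>(z_n) + \<alpha> e, and strong monotonicity of \<nu> at its root z* makes this
  implicit step a contraction of \<parallel>z - z*\<parallel>^2 by roughly exp(-n\<alpha>\<mu>), up to the error \<alpha> \<parallel>e\<parallel>.
  Lipschitz continuity bounds \<parallel>e\<parallel> by \<parallel>z - z*\<parallel> and by the norms of the tail sums
  \<Sum>_(j>i) \<omega>_p(j)(z*), whose full sum n \<nu>(z*) is zero. Under a uniform permutation these tails are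
  sums of samples drawn without replacement from the vectors \<omega>_i(z*), so their second moments are
  explicit multiples of \<sigma>*^2. The per-epoch recursion is additive in this noise, so averaging over
  fresh permutations (RR) or over one shared permutation (SO) gives the same bound; the second
  estimate is the first one at the tuned step size.
\<close>

lemma finite_perms: "finite (perms n)"
  unfolding perms_def by (rule finite_permutations) simp

lemma card_perms: "card (perms n) = fact n"
  unfolding perms_def by (rule card_permutations) simp_all

lemma perms_lessThan: "p \<in> perms n \<Longrightarrow> i < n \<Longrightarrow> p i < n"
  using permutes_in_image[of p "{0..<n}" i] by (auto simp: perms_def)

lemma sum_perms_apply: "p \<in> perms n \<Longrightarrow> (\<Sum>j<n. g (p j)) = (\<Sum>a<n. g a)"
  using sum.permute[of p "{..<n}" g] by (simp add: perms_def atLeast0LessThan comp_def)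

lemma sum_perms_compose_transpose:
  assumes "a < n" "b < n"
  shows "(\<Sum>p\<in>perms n. f p) = (\<Sum>p\<in>perms n. f (p \<circ> Transposition.transpose a b))"
  unfolding perms_def
  by (rule sum_permutations_compose_right) (use assms in \<open>auto intro: permutes_swap_id\<close>)

lemma sum_perms_at:
  fixes f :: "nat \<Rightarrow> real"
  assumes j: "j < n"
  shows "(\<Sum>p\<in>perms n. f (p j)) = real (card (perms n)) / real n * (\<Sum>a<n. f a)"
proof -
  have "(\<Sum>p\<in>perms n. f (p j')) = (\<Sum>p\<in>perms n. f (p j))" if "j' < n" for j'
    using sum_perms_compose_transpose[OF j that, of "\<lambda>p. f (p j)"] by simp
  then have "(\<Sum>j'<n. \<Sum>p\<in>perms n. f (p j')) = (\<Sum>j'<n. \<Sum>p\<in>perms n. f (p j))"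
    by simp
  moreover have "(\<Sum>j'<n. \<Sum>p\<in>perms n. f (p j')) = real (card (perms n)) * (\<Sum>a<n. f a)"
    by (subst sum.swap) (simp add: sum_perms_apply)
  ultimately show ?thesis
    using j by (simp add: field_simps)
qed

lemma sum_perms_inner_at_distinct:
  fixes v :: "nat \<Rightarrow> 'a::real_inner"
  assumes v0: "(\<Sum>a<n. v a) = 0" and jk: "j < n" "k < n" "k \<noteq> j"
  shows "(\<Sum>p\<in>perms n. inner (v (p j)) (v (p k)))
       = - real (card (perms n)) / (real n * (real n - 1)) * (\<Sum>a<n. (norm (v a))\<^sup>2)"
proof -
  have n2: "real n \<ge> 2" using jk by linarith
  have "(\<Sum>k'\<in>{..<n}-{j}. \<Sum>p\<in>perms n. inner (v (p j)) (v (p k')))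
      = (\<Sum>k'\<in>{..<n}-{j}. \<Sum>p\<in>perms n. inner (v (p j)) (v (p k)))"
  proof (rule sum.cong[OF refl])
    fix k' assume "k' \<in> {..<n} - {j}"
    then show "(\<Sum>p\<in>perms n. inner (v (p j)) (v (p k'))) = (\<Sum>p\<in>perms n. inner (v (p j)) (v (p k)))"
      using sum_perms_compose_transpose[of k n k', of "\<lambda>p. inner (v (p j)) (v (p k))"] jk by auto
  qed
  also have "\<dots> = (real n - 1) * (\<Sum>p\<in>perms n. inner (v (p j)) (v (p k)))"
    using jk by (simp add: of_nat_diff)
  finally have "(real n - 1) * (\<Sum>p\<in>perms n. inner (v (p j)) (v (p k)))
      = (\<Sum>p\<in>perms n. inner (v (p j)) (\<Sum>k'\<in>{..<n}-{j}. v (p k')))"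
    by (subst (asm) sum.swap) (simp add: inner_sum_right)
  also have "\<dots> = (\<Sum>p\<in>perms n. - (norm (v (p j)))\<^sup>2)"
  proof (rule sum.cong[OF refl])
    fix p assume p: "p \<in> perms n"
    have "v (p j) + (\<Sum>k'\<in>{..<n}-{j}. v (p k')) = (\<Sum>k'<n. v (p k'))"
      using jk by (subst (2) sum.remove[of _ j]) auto
    also have "\<dots> = 0" using sum_perms_apply[OF p, of v] v0 by simp
    finally show "inner (v (p j)) (\<Sum>k'\<in>{..<n}-{j}. v (p k')) = - (norm (v (p j)))\<^sup>2"
      by (simp add: add_eq_0_iff2 power2_norm_eq_inner)
  qed
  also have "\<dots> = - (real (card (perms n)) / real n * (\<Sum>a<n. (norm (v a))\<^sup>2))"
    using sum_perms_at[OF jk(1), of "\<lambda>a. (norm (v a))\<^sup>2"] by (simp add: sum_negf)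
  finally show ?thesis
    using n2 by (simp add: field_simps)
qed

lemma sum_perms_norm_sum_sq:
  fixes v :: "nat \<Rightarrow> 'a::real_inner"
  assumes n: "n \<ge> 2" and v0: "(\<Sum>a<n. v a) = 0" and T: "T \<subseteq> {..<n}"
  shows "(\<Sum>p\<in>perms n. (norm (\<Sum>j\<in>T. v (p j)))\<^sup>2)
       = real (card (perms n)) / real n * (\<Sum>a<n. (norm (v a))\<^sup>2)
           * real (card T) * (real n - real (card T)) / (real n - 1)"
proof -
  define D where "D = real (card (perms n)) / real n * (\<Sum>a<n. (norm (v a))\<^sup>2)"
  have finT: "finite T" using T finite_subset by blast
  have row: "(\<Sum>k\<in>T. \<Sum>p\<in>perms n. inner (v (p j)) (v (p k)))
      = D + (real (card T) - 1) * (- D / (real n - 1))" if j: "j \<in> T" for j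
  proof -
    have off: "(\<Sum>p\<in>perms n. inner (v (p j)) (v (p k))) = - D / (real n - 1)" if "k \<in> T - {j}" for k
      using sum_perms_inner_at_distinct[OF v0, of j k] that j T by (auto simp: D_def)
    have "card (T - {j}) = card T - 1" and "card T \<ge> 1"
      using j finT by (auto simp: Suc_le_eq card_gt_0_iff)
    then have "(\<Sum>k\<in>T - {j}. \<Sum>p\<in>perms n. inner (v (p j)) (v (p k)))
        = (real (card T) - 1) * (- D / (real n - 1))"
      using off by (simp add: of_nat_diff)
    moreover have "(\<Sum>p\<in>perms n. inner (v (p j)) (v (p j))) = D"
      using sum_perms_at[of j n "\<lambda>a. (norm (v a))\<^sup>2"] j T by (auto simp: D_def power2_norm_eq_inner)
    ultimately show ?thesis
      using j finT by (subst sum.remove[of _ j]) auto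
  qed
  have "(\<Sum>p\<in>perms n. (norm (\<Sum>j\<in>T. v (p j)))\<^sup>2)
      = (\<Sum>p\<in>perms n. \<Sum>j\<in>T. \<Sum>k\<in>T. inner (v (p j)) (v (p k)))"
    by (simp add: power2_norm_eq_inner inner_sum_left inner_sum_right inner_commute)
  also have "\<dots> = (\<Sum>j\<in>T. \<Sum>k\<in>T. \<Sum>p\<in>perms n. inner (v (p j)) (v (p k)))"
    by (subst sum.swap, rule sum.cong[OF refl], rule sum.swap)
  also have "\<dots> = real (card T) * (D + (real (card T) - 1) * (- D / (real n - 1)))"
    using row by simp
  also have "\<dots> = D * real (card T) * (real n - real (card T)) / (real n - 1)"
    using n by (simp add: field_simps)
  finally show ?thesis
    by (simp add: D_def)
qed

lemma sum_PiE_apply: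
  fixes f :: "'b \<Rightarrow> real"
  assumes I: "finite I" "k \<in> I" and P: "finite P"
  shows "(\<Sum>\<tau>\<in>PiE I (\<lambda>_. P). f (\<tau> k)) = real (card P) ^ (card I - 1) * (\<Sum>p\<in>P. f p)"
proof -
  define g where "g x y = (if x = k then f y else 1)" for x y
  have "(\<Sum>\<tau>\<in>PiE I (\<lambda>_. P). f (\<tau> k)) = (\<Sum>\<tau>\<in>PiE I (\<lambda>_. P). \<Prod>x\<in>I. g x (\<tau> x))"
    using I by (intro sum.cong refl) (simp add: g_def prod.remove[of I k])
  also have "\<dots> = (\<Prod>x\<in>I. \<Sum>y\<in>P. g x y)"
    by (rule prod_sum_PiE[symmetric]) (use I P in auto)
  also have "\<dots> = (\<Sum>y\<in>P. f y) * real (card P) ^ (card I - 1)"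
    using I by (subst prod.remove[of I k]) (auto simp: g_def intro!: prod.cong)
  finally show ?thesis by simp
qed

lemma sum_PiE_perms_apply:
  fixes f :: "(nat \<Rightarrow> nat) \<Rightarrow> real"
  assumes "finite I" "k \<in> I"
  shows "(\<Sum>\<tau>\<in>PiE I (\<lambda>_. perms n). f (\<tau> k)) / real (card (PiE I (\<lambda>_. perms n)))
       = (\<Sum>p\<in>perms n. f p) / real (card (perms n))"
proof -
  obtain m where m: "card I = Suc m"
    using assms by (metis card_gt_0_iff empty_iff gr0_implies_Suc)
  then have "real (card (PiE I (\<lambda>_. perms n))) = real (card (perms n)) * real (card (perms n)) ^ (card I - 1)"
    using assms by (simp add: card_PiE)
  then show ?thesis
    using sum_PiE_apply[OF assms finite_perms, of f n] by (simp add: card_perms)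
qed

lemma iterate_contraction_noise:
  fixes a d :: "nat \<Rightarrow> real"
  assumes step: "\<And>k. k < K \<Longrightarrow> a (Suc k) \<le> c * a k + d (Suc k)"
    and c: "0 \<le> c" "c \<le> 1" and d: "\<And>k. d k \<ge> 0"
  shows "a K \<le> c ^ K * a 0 + (\<Sum>j\<in>{1..K}. d j)"
  using step
proof (induction K)
  case 0 then show ?case by simp
next
  case (Suc K)
  have "a K \<le> c ^ K * a 0 + (\<Sum>j\<in>{1..K}. d j)"
    using Suc by simp
  then have "a (Suc K) \<le> c * (c ^ K * a 0 + (\<Sum>j\<in>{1..K}. d j)) + d (Suc K)"
    using Suc.prems[of K] c by (smt (verit) mult_left_mono lessI)
  also have "\<dots> \<le> c ^ Suc K * a 0 + (\<Sum>j\<in>{1..K}. d j) + d (Suc K)"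
    using c d mult_left_le_one_le[of "\<Sum>j\<in>{1..K}. d j" c] by (simp add: sum_nonneg algebra_simps)
  finally show ?case by simp
qed

lemma power2_add_le_weighted:
  fixes a b e :: real
  assumes "e > 0"
  shows "(a + b)\<^sup>2 \<le> (1 + e) * a\<^sup>2 + (1 + 1 / e) * b\<^sup>2"
proof -
  have "0 \<le> (e * a - b)\<^sup>2 / e" using assms by simp
  also have "\<dots> = e * a\<^sup>2 - 2 * a * b + b\<^sup>2 / e"
    using assms by (simp add: power2_eq_square field_simps)
  finally show ?thesis using assms by (simp add: power2_eq_square field_simps)
qed

lemma contraction_factor_le_exp:
  fixes q :: real
  assumes q: "0 \<le> q" "q \<le> 1/5"
  shows "(1 + 7*q/20) * (1 + q/8)\<^sup>2 / (1 + 2*q) \<le> exp (- q)"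
proof -
  have pow: "q ^ Suc k \<le> q * (1/5) ^ k" for k
    using mult_left_mono[OF power_mono[OF q(2), of k] q(1)] q by simp
  have poly: "(1 + 7*q/20) * (1 + q/8)\<^sup>2 * (1 + q + q\<^sup>2) \<le> 1 + 2*q"
  proof -
    have "(1 + 7*q/20) * (1 + q/8)\<^sup>2 * (1 + q + q\<^sup>2)
        = 1 + 2*q - 2/5*q + 109/64*q^2 + 907/1280*q^3 + 139/1280*q^4 + 7/1280*q^5"
      by (simp add: eval_nat_numeral field_simps)
    moreover have "q^2 \<le> q/5" "q^3 \<le> q/25" "q^4 \<le> q/125" "q^5 \<le> q/625"
      using pow[of 1] pow[of 2] pow[of 3] pow[of 4] by (simp_all add: numeral_eq_Suc power_divide)
    ultimately show ?thesis using q by linarith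
  qed
  have "(1 + 7*q/20) * (1 + q/8)\<^sup>2 * exp q \<le> (1 + 7*q/20) * (1 + q/8)\<^sup>2 * (1 + q + q\<^sup>2)"
    using exp_bound[of q] q by (intro mult_left_mono) auto
  with poly have "(1 + 7*q/20) * (1 + q/8)\<^sup>2 * exp q \<le> 1 + 2*q"
    by linarith
  moreover have "exp q * exp (- q) = 1" by (simp add: exp_minus)
  ultimately have "(1 + 7*q/20) * (1 + q/8)\<^sup>2 \<le> (1 + 2*q) * exp (- q)"
    by (metis exp_gt_zero mult.assoc mult.right_neutral mult_le_cancel_right_pos)
  then show ?thesis
    using q by (simp add: pos_divide_le_eq mult.commute)
qed

lemma perturbed_monotone_step:
  fixes u g w e :: "'a::real_inner"
  assumes decomp: "w - e = u + c *\<^sub>R g" and mono: "inner g u \<ge> \<mu> * (norm u)\<^sup>2"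
    and c: "c > 0" and q: "q = c * \<mu>" "0 < q" "q \<le> 1/5"
    and e: "norm e \<le> q/8 * norm w + W" and W: "W \<ge> 0"
  shows "(norm u)\<^sup>2 \<le> exp (- q) * (norm w)\<^sup>2 + 20 / (7*q) * W\<^sup>2"
proof -
  have "(norm (w - e))\<^sup>2 = (norm u)\<^sup>2 + 2 * c * inner g u + c\<^sup>2 * (norm g)\<^sup>2"
    unfolding decomp power2_norm_eq_inner
    by (simp add: inner_add_left inner_add_right inner_commute power2_eq_square)
  moreover have "2 * c * (\<mu> * (norm u)\<^sup>2) \<le> 2 * c * inner g u"
    using mono c by (intro mult_left_mono) auto
  moreover have "0 \<le> c\<^sup>2 * (norm g)\<^sup>2" by simp
  moreover have "(1 + 2*q) * (norm u)\<^sup>2 = (norm u)\<^sup>2 + 2 * c * (\<mu> * (norm u)\<^sup>2)"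
    using q(1) by (simp add: algebra_simps)
  ultimately have "(1 + 2*q) * (norm u)\<^sup>2 \<le> (norm (w - e))\<^sup>2"
    by linarith
  also have "\<dots> \<le> ((1 + q/8) * norm w + W)\<^sup>2"
    using norm_triangle_ineq4[of w e] e by (intro power_mono) (auto simp: algebra_simps)
  also have "\<dots> \<le> (1 + 7*q/20) * (1 + q/8)\<^sup>2 * (norm w)\<^sup>2 + (1 + 20/(7*q)) * W\<^sup>2"
    using power2_add_le_weighted[of "7*q/20" "(1 + q/8) * norm w" W] q
    by (simp add: power_mult_distrib mult.assoc)
  finally have main: "(1 + 2*q) * (norm u)\<^sup>2
      \<le> (1 + 7*q/20) * (1 + q/8)\<^sup>2 * (norm w)\<^sup>2 + (1 + 20/(7*q)) * W\<^sup>2" .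
  have "1 + 20/(7*q) \<le> (1 + 2*q) * (20 / (7*q))"
    using q(2) by (simp add: field_simps)
  then have "(1 + 20/(7*q)) * W\<^sup>2 \<le> (1 + 2*q) * (20 / (7*q) * W\<^sup>2)"
    by (metis mult.assoc mult_right_mono zero_le_power2)
  moreover have "(1 + 7*q/20) * (1 + q/8)\<^sup>2 * (norm w)\<^sup>2 \<le> (1 + 2*q) * (exp (- q) * (norm w)\<^sup>2)"
    using mult_right_mono[OF contraction_factor_le_exp[of q] zero_le_power2[of "norm w"]] q(2-3)
    by (simp add: field_simps)
  ultimately have "(1 + 2*q) * (norm u)\<^sup>2 \<le> (1 + 2*q) * (exp (- q) * (norm w)\<^sup>2 + 20 / (7*q) * W\<^sup>2)"
    using main by (simp add: algebra_simps)
  then show ?thesis using q(2) by simp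
qed

lemma implicit_step_unique:
  fixes F :: "'a::banach \<Rightarrow> 'a"
  assumes F: "l-lipschitz_on UNIV F" and \<alpha>: "0 \<le> \<alpha>" "\<alpha> * l < 1"
  shows "\<exists>!z. z = x - \<alpha> *\<^sub>R F z"
proof -
  have "dist (x - \<alpha> *\<^sub>R F a) (x - \<alpha> *\<^sub>R F b) \<le> \<alpha> * l * dist a b" for a b
  proof -
    have "dist (x - \<alpha> *\<^sub>R F a) (x - \<alpha> *\<^sub>R F b) = \<alpha> * dist (F a) (F b)"
      using \<alpha> by (simp add: dist_norm scaleR_diff_right[symmetric] norm_minus_commute)
    also have "\<dots> \<le> \<alpha> * (l * dist a b)"
      using lipschitz_onD[OF F] \<alpha> by (intro mult_left_mono) auto
    finally show ?thesis by (simp add: mult.assoc)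
  qed
  then have "\<exists>!z. x - \<alpha> *\<^sub>R F z = z"
    using \<alpha> lipschitz_on_nonneg[OF F] by (intro banach_fix_type) auto
  then show ?thesis by metis
qed

lemma prox_step_eq:
  assumes "\<exists>!z. z = x - \<alpha> *\<^sub>R F z"
  shows "prox_step \<alpha> F x = x - \<alpha> *\<^sub>R F (prox_step \<alpha> F x)"
  unfolding prox_step_def by (rule theI'[OF assms])

definition ppm_iterate :: "real \<Rightarrow> (nat \<Rightarrow> 'a::real_vector \<Rightarrow> 'a) \<Rightarrow> (nat \<Rightarrow> nat) \<Rightarrow> 'a \<Rightarrow> nat \<Rightarrow> 'a"
  where "ppm_iterate \<alpha> \<omega> p z i = foldl (\<lambda>x j. prox_step \<alpha> (\<omega> (p j)) x) z [0..<i]"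

lemma ppm_iterate_0 [simp]: "ppm_iterate \<alpha> \<omega> p z 0 = z"
  by (simp add: ppm_iterate_def)

lemma ppm_iterate_Suc: "ppm_iterate \<alpha> \<omega> p z (Suc i) = prox_step \<alpha> (\<omega> (p i)) (ppm_iterate \<alpha> \<omega> p z i)"
  by (simp add: ppm_iterate_def)

lemma ppm_epoch_eq_iterate: "ppm_epoch n \<alpha> \<omega> p z = ppm_iterate \<alpha> \<omega> p z n"
  by (simp add: ppm_iterate_def ppm_epoch_def)

lemma sum_diff_Suc_mult_Suc:
  "(\<Sum>i<n. real (n - Suc i) * real (Suc i)) * 6 = real n ^ 3 - real n"
proof (induction n)
  case (Suc n)
  have "(\<Sum>i<Suc n. real (Suc n - Suc i) * real (Suc i))
      = (\<Sum>i<n. real (n - Suc i) * real (Suc i)) + (\<Sum>i<n. real (Suc i))"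
    by (simp add: sum.distrib[symmetric] of_nat_diff algebra_simps)
  moreover have "(\<Sum>i<n. real (Suc i)) = real n * (real n + 1) / 2"
    by (induction n) (auto simp: field_simps)
  ultimately show ?case using Suc.IH by (simp add: field_simps power3_eq_cube)
qed simp

lemma sum_diff_Suc_le: "(\<Sum>i<n. real (n - Suc i)) \<le> (real n)\<^sup>2 / 2"
proof -
  have "(\<Sum>i<n. real (n - Suc i)) = (\<Sum>i<n. real i)"
    by (rule sum.nat_diff_reindex)
  also have "\<dots> \<le> (real n)\<^sup>2 / 2"
    by (induction n) (auto simp: power2_eq_square field_simps)
  finally show ?thesis .
qed

locale strongly_monotone_finite_sum =
  fixes \<omega> :: "nat \<Rightarrow> 'a::euclidean_space \<Rightarrow> 'a" and n :: nat and l \<mu> :: real and zs :: 'a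
  assumes n_pos: "n \<ge> 1"
    and lipschitz: "\<And>i. i < n \<Longrightarrow> l-lipschitz_on UNIV (\<omega> i)"
    and mu_pos: "\<mu> > 0"
    and nu_strongly_monotone: "strongly_monotone \<mu> (nu n \<omega>)"
    and nu_root: "nu n \<omega> zs = 0"
begin

lemma norm_diff_le: "i < n \<Longrightarrow> norm (\<omega> i a - \<omega> i b) \<le> l * norm (a - b)"
  using lipschitz_onD[OF lipschitz] by (simp add: dist_norm)

lemma sum_at_root: "(\<Sum>a<n. \<omega> a zs) = 0"
  using nu_root n_pos by (simp add: nu_def)

lemma nu_norm_diff_le: "norm (nu n \<omega> a - nu n \<omega> b) \<le> l * norm (a - b)"
proof -
  have "norm (nu n \<omega> a - nu n \<omega> b) = norm (\<Sum>i<n. \<omega> i a - \<omega> i b) / real n"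
    by (simp add: nu_def sum_subtractf scaleR_diff_right[symmetric])
  also have "\<dots> \<le> (\<Sum>i<n. l * norm (a - b)) / real n"
    by (intro divide_right_mono order_trans[OF norm_sum] sum_mono norm_diff_le) auto
  also have "\<dots> = l * norm (a - b)" using n_pos by simp
  finally show ?thesis .
qed

lemma mu_le_l: "\<mu> \<le> l"
proof -
  obtain b :: 'a where b: "b \<in> Basis" using nonempty_Basis by blast
  have "\<mu> * (norm b)\<^sup>2 \<le> inner (nu n \<omega> b - nu n \<omega> 0) b"
    using nu_strongly_monotone unfolding strongly_monotone_def by (metis diff_zero)
  also have "\<dots> \<le> norm (nu n \<omega> b - nu n \<omega> 0) * norm b" by (rule norm_cauchy_schwarz)
  also have "\<dots> \<le> l * norm b * norm b"
    using nu_norm_diff_le[of b 0] by (intro mult_right_mono) auto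
  finally show ?thesis using b by simp
qed

lemma l_pos: "l > 0"
  using mu_pos mu_le_l by simp

lemma mu_norm_diff_root_le: "\<mu> * norm (z - zs) \<le> norm (nu n \<omega> z)"
proof (cases "z = zs")
  case False
  have "\<mu> * (norm (z - zs))\<^sup>2 \<le> inner (nu n \<omega> z - nu n \<omega> zs) (z - zs)"
    using nu_strongly_monotone unfolding strongly_monotone_def by blast
  also have "\<dots> \<le> norm (nu n \<omega> z) * norm (z - zs)"
    using norm_cauchy_schwarz[of "nu n \<omega> z" "z - zs"] nu_root by simp
  finally show ?thesis
    using False by (simp add: power2_eq_square)
qed simp

definition root_tail :: "(nat \<Rightarrow> nat) \<Rightarrow> nat \<Rightarrow> 'a"
  where "root_tail p i = (\<Sum>j\<in>{i..<n}. \<omega> (p j) zs)"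

definition tail_mass :: "(nat \<Rightarrow> nat) \<Rightarrow> real"
  where "tail_mass p = (\<Sum>i<n. norm (root_tail p (Suc i)))"

lemma tail_mass_nonneg: "tail_mass p \<ge> 0"
  by (simp add: tail_mass_def sum_nonneg)

lemma sum_perms_tail_mass_sq_le:
  "(\<Sum>p\<in>perms n. (tail_mass p)\<^sup>2) \<le> real (card (perms n)) * sigma_star_sq n \<omega> zs * (real n ^ 3 - real n) / 6"
proof (cases "n = 1")
  case True
  then show ?thesis unfolding tail_mass_def root_tail_def by simp
next
  case False
  then have n2: "n \<ge> 2" using n_pos by simp
  define N where "N = real (card (perms n))"
  define a where "a p i = norm (root_tail p (Suc i))" for p i
  \<comment> \<open>The last tail is empty, so Cauchy--Schwarz costs only \<open>n - 1\<close>; this yields \<open>n\<^sup>3 - n\<close>.\<close>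
  have cauchy_schwarz: "(tail_mass p)\<^sup>2 \<le> (real n - 1) * (\<Sum>i<n. (a p i)\<^sup>2)" for p
  proof -
    obtain m where m: "n = Suc m" using n2 by (metis Suc_le_D numeral_2_eq_2)
    then have "tail_mass p = (\<Sum>i<n - 1. a p i)"
      unfolding tail_mass_def a_def root_tail_def by simp
    then have "(tail_mass p)\<^sup>2 \<le> (\<Sum>i<n - 1. (a p i)\<^sup>2) * real (n - 1)"
      using sum_squared_le_sum_of_squares[of "a p" "{..<n - 1}"] by simp
    also have "\<dots> \<le> (\<Sum>i<n. (a p i)\<^sup>2) * real (n - 1)"
      by (intro mult_right_mono sum_mono2) auto
    finally show ?thesis using n2 by (simp add: of_nat_diff mult.commute)
  qed
  have variance: "(\<Sum>p\<in>perms n. (a p i)\<^sup>2)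
      = N * sigma_star_sq n \<omega> zs * (real (n - Suc i) * real (Suc i)) / (real n - 1)" if "i < n" for i
    using sum_perms_norm_sum_sq[OF n2 sum_at_root, of "{Suc i..<n}"] that
    by (simp add: a_def root_tail_def N_def sigma_star_sq_def of_nat_diff subset_eq mult.assoc)
  have "(\<Sum>p\<in>perms n. (tail_mass p)\<^sup>2) \<le> (real n - 1) * (\<Sum>i<n. \<Sum>p\<in>perms n. (a p i)\<^sup>2)"
    using sum_mono[of "perms n", OF cauchy_schwarz]
    by (simp add: sum_distrib_left[symmetric] sum.swap[of _ "perms n"])
  also have "\<dots> = N * sigma_star_sq n \<omega> zs * (\<Sum>i<n. real (n - Suc i) * real (Suc i))"
    using n2 by (simp add: variance sum_distrib_left)
  also have "\<dots> = N * sigma_star_sq n \<omega> zs * (real n ^ 3 - real n) / 6"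
    using sum_diff_Suc_mult_Suc[of n] by simp
  finally show ?thesis by (simp add: N_def)
qed

end

locale ppm_step = strongly_monotone_finite_sum +
  fixes \<alpha> :: real
  assumes alpha_pos: "0 < \<alpha>" and alpha_le: "\<alpha> \<le> \<mu> / (5 * real n * l\<^sup>2)"
begin

lemma alpha_l_n_le: "\<alpha> * l * n \<le> 1/5"
proof -
  have "\<alpha> * l * n \<le> \<mu> / (5 * real n * l\<^sup>2) * l * n"
    using alpha_le l_pos by (intro mult_right_mono) auto
  also have "\<dots> = \<mu> / (5 * l)" using l_pos n_pos by (simp add: power2_eq_square field_simps)
  also have "\<dots> \<le> 1/5" using mu_le_l l_pos by (simp add: field_simps)
  finally show ?thesis .
qed

lemma alpha_l_n_sq_le: "(\<alpha> * l * n)\<^sup>2 \<le> n * \<alpha> * \<mu> / 5"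
proof -
  have "\<alpha> * n * l\<^sup>2 \<le> \<mu> / 5" using alpha_le l_pos n_pos by (simp add: field_simps)
  then have "(\<alpha> * n) * (\<alpha> * n * l\<^sup>2) \<le> (\<alpha> * n) * (\<mu> / 5)"
    using alpha_pos by (intro mult_left_mono) auto
  then show ?thesis by (simp add: power2_eq_square mult_ac)
qed

lemma n_alpha_mu_le: "n * \<alpha> * \<mu> \<le> 1/5"
proof -
  have "n * \<alpha> * \<mu> \<le> n * \<alpha> * l" using mu_le_l alpha_pos by (intro mult_left_mono) auto
  then show ?thesis using alpha_l_n_le by (simp add: mult_ac)
qed

lemma prox_well_defined: "prox_well_defined n \<alpha> \<omega>"
  unfolding prox_well_defined_def
proof (intro allI impI)
  fix j x assume j: "j < n"
  have "\<alpha> * l \<le> \<alpha> * l * n" using n_pos alpha_pos l_pos by simp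
  then have "\<alpha> * l < 1" using alpha_l_n_le by linarith
  then show "\<exists>!z. z = x - \<alpha> *\<^sub>R \<omega> j z"
    using implicit_step_unique[OF lipschitz[OF j]] alpha_pos by simp
qed

definition epoch_noise :: "(nat \<Rightarrow> nat) \<Rightarrow> real"
  where "epoch_noise p = 43/10 * l\<^sup>2 * \<alpha>^3 / (real n * \<mu>) * (tail_mass p)\<^sup>2"

context
  fixes p :: "nat \<Rightarrow> nat" and z :: 'a
  assumes p: "p \<in> perms n"
begin

abbreviation iter :: "nat \<Rightarrow> 'a" where "iter \<equiv> ppm_iterate \<alpha> \<omega> p z"

lemma iter_Suc: "i < n \<Longrightarrow> iter (Suc i) = iter i - \<alpha> *\<^sub>R \<omega> (p i) (iter (Suc i))"
  unfolding ppm_iterate_Suc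
  by (rule prox_step_eq) (use prox_well_defined perms_lessThan[OF p] in \<open>auto simp: prox_well_defined_def\<close>)

lemma iter_diff: "i + k \<le> n \<Longrightarrow> iter i - iter (i + k) = \<alpha> *\<^sub>R (\<Sum>j\<in>{i..<i+k}. \<omega> (p j) (iter (Suc j)))"
proof (induction k)
  case (Suc k)
  then show ?case
    using iter_Suc[of "i + k"] by (simp add: algebra_simps)
qed simp

lemma norm_gradient_diff_root_le:
  "i < n \<Longrightarrow> norm (\<omega> (p i) x - \<omega> (p i) zs) \<le> l * norm (x - zs)"
  using norm_diff_le perms_lessThan[OF p] by blast

lemma sum_prefix_at_root: "j < n \<Longrightarrow> (\<Sum>i<Suc j. \<omega> (p i) zs) = - root_tail p (Suc j)"
proof -
  assume j: "j < n"
  have "(\<Sum>i<Suc j. \<omega> (p i) zs) + root_tail p (Suc j) = (\<Sum>i<n. \<omega> (p i) zs)"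
    unfolding root_tail_def lessThan_atLeast0 using j by (intro sum.atLeastLessThan_concat) auto
  also have "\<dots> = 0" using sum_perms_apply[OF p, of "\<lambda>a. \<omega> a zs"] sum_at_root by simp
  finally show ?thesis by (simp add: eq_neg_iff_add_eq_0)
qed

lemma norm_iter_diff_root_le:
  assumes j: "j < n"
  shows "norm (iter (Suc j) - zs)
    \<le> norm (z - zs) + \<alpha> * norm (root_tail p (Suc j)) + \<alpha> * l * (\<Sum>i<n. norm (iter (Suc i) - zs))"
proof -
  define D where "D = (\<Sum>i<Suc j. \<omega> (p i) (iter (Suc i)) - \<omega> (p i) zs)"
  have "iter (Suc j) - zs = ((z - zs) + \<alpha> *\<^sub>R root_tail p (Suc j)) - \<alpha> *\<^sub>R D"
    using iter_diff[of 0 "Suc j"] sum_prefix_at_root[OF j] j unfolding D_def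
    by (simp add: atLeast0LessThan sum_subtractf scaleR_diff_right algebra_simps)
  then have "norm (iter (Suc j) - zs) \<le> norm (z - zs) + \<alpha> * norm (root_tail p (Suc j)) + \<alpha> * norm D"
    using norm_triangle_ineq4[of "(z - zs) + \<alpha> *\<^sub>R root_tail p (Suc j)" "\<alpha> *\<^sub>R D"]
      norm_triangle_ineq[of "z - zs" "\<alpha> *\<^sub>R root_tail p (Suc j)"] alpha_pos
    by (simp only: norm_scaleR abs_of_pos)
  moreover have "norm D \<le> l * (\<Sum>i<n. norm (iter (Suc i) - zs))"
  proof -
    have "norm D \<le> (\<Sum>i<Suc j. l * norm (iter (Suc i) - zs))"
      unfolding D_def using j by (intro order_trans[OF norm_sum] sum_mono norm_gradient_diff_root_le) auto
    also have "\<dots> \<le> (\<Sum>i<n. l * norm (iter (Suc i) - zs))"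
      using j l_pos by (intro sum_mono2) auto
    finally show ?thesis by (simp add: sum_distrib_left)
  qed
  ultimately show ?thesis
    using mult_left_mono[of _ _ \<alpha>] alpha_pos by (smt (verit) mult.assoc)
qed

lemma sum_norm_iter_diff_root_le:
  "(\<Sum>i<n. norm (iter (Suc i) - zs)) \<le> 5/4 * (n * norm (z - zs) + \<alpha> * tail_mass p)"
proof -
  define A where "A = (\<Sum>i<n. norm (iter (Suc i) - zs))"
  have "A \<le> (\<Sum>j<n. norm (z - zs) + \<alpha> * norm (root_tail p (Suc j)) + \<alpha> * l * A)"
    unfolding A_def by (intro sum_mono norm_iter_diff_root_le[unfolded A_def]) simp
  also have "\<dots> = n * norm (z - zs) + \<alpha> * tail_mass p + (\<alpha> * l * n) * A"
    by (simp add: sum.distrib tail_mass_def sum_distrib_left algebra_simps)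
  also have "\<dots> \<le> n * norm (z - zs) + \<alpha> * tail_mass p + 1/5 * A"
    using alpha_l_n_le by (intro add_left_mono mult_right_mono) (auto simp: A_def sum_nonneg)
  finally show ?thesis by (simp add: A_def)
qed

lemma norm_iter_diff_end_le:
  assumes i: "i < n"
  shows "norm (iter (Suc i) - iter n) \<le> \<alpha> * norm (root_tail p (Suc i))
    + \<alpha> * l * (real (n - Suc i) * (norm (z - zs) + \<alpha> * l * (\<Sum>i<n. norm (iter (Suc i) - zs)))
    + \<alpha> * tail_mass p)"
proof -
  define A where "A = (\<Sum>i<n. norm (iter (Suc i) - zs))"
  define D where "D = (\<Sum>j\<in>{Suc i..<n}. \<omega> (p j) (iter (Suc j)) - \<omega> (p j) zs)"
  have "iter (Suc i) - iter n = \<alpha> *\<^sub>R root_tail p (Suc i) + \<alpha> *\<^sub>R D"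
    using iter_diff[of "Suc i" "n - Suc i"] i
    by (simp add: D_def root_tail_def sum_subtractf scaleR_diff_right)
  then have "norm (iter (Suc i) - iter n) \<le> \<alpha> * norm (root_tail p (Suc i)) + \<alpha> * norm D"
    using norm_triangle_ineq[of "\<alpha> *\<^sub>R root_tail p (Suc i)" "\<alpha> *\<^sub>R D"] alpha_pos
    by (simp only: norm_scaleR abs_of_pos)
  moreover have "norm D \<le> l * (real (n - Suc i) * (norm (z - zs) + \<alpha> * l * A) + \<alpha> * tail_mass p)"
  proof -
    have "norm D \<le> (\<Sum>j\<in>{Suc i..<n}. l * (norm (z - zs) + \<alpha> * l * A + \<alpha> * norm (root_tail p (Suc j))))"
    proof (unfold D_def, intro order_trans[OF norm_sum] sum_mono)
      fix j assume "j \<in> {Suc i..<n}"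
      then have j: "j < n" by simp
      show "norm (\<omega> (p j) (iter (Suc j)) - \<omega> (p j) zs)
          \<le> l * (norm (z - zs) + \<alpha> * l * A + \<alpha> * norm (root_tail p (Suc j)))"
        using norm_gradient_diff_root_le[OF j] norm_iter_diff_root_le[OF j] l_pos
        unfolding A_def by (smt (verit) mult_left_mono)
    qed
    also have "\<dots> = l * (real (n - Suc i) * (norm (z - zs) + \<alpha> * l * A)
        + \<alpha> * (\<Sum>j\<in>{Suc i..<n}. norm (root_tail p (Suc j))))"
      by (simp add: sum.distrib sum_distrib_left algebra_simps)
    also have "\<dots> \<le> l * (real (n - Suc i) * (norm (z - zs) + \<alpha> * l * A) + \<alpha> * tail_mass p)"
      unfolding tail_mass_def using alpha_pos l_pos
      by (intro mult_left_mono add_left_mono sum_mono2) auto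
    finally show ?thesis .
  qed
  ultimately show ?thesis
    using alpha_pos mult_left_mono[of _ _ \<alpha>] unfolding A_def by (smt (verit) mult.assoc)
qed

lemma norm_epoch_error_le_tails:
  "norm (\<Sum>i<n. \<omega> (p i) (iter (Suc i)) - \<omega> (p i) (iter n))
    \<le> l * \<alpha> * tail_mass p + real n * l * \<alpha> * l * \<alpha> * tail_mass p
      + l * \<alpha> * l * (norm (z - zs) + \<alpha> * l * (\<Sum>i<n. norm (iter (Suc i) - zs)))
          * (\<Sum>i<n. real (n - Suc i))"
proof -
  define R where "R = norm (z - zs) + \<alpha> * l * (\<Sum>i<n. norm (iter (Suc i) - zs))"
  define d where "d i = real (n - Suc i)" for i
  have "norm (\<Sum>i<n. \<omega> (p i) (iter (Suc i)) - \<omega> (p i) (iter n))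
      \<le> (\<Sum>i<n. l * (\<alpha> * norm (root_tail p (Suc i)) + \<alpha> * l * (d i * R + \<alpha> * tail_mass p)))"
    unfolding R_def d_def using l_pos perms_lessThan[OF p]
    by (intro order_trans[OF norm_sum] sum_mono order_trans[OF norm_diff_le]
        mult_left_mono norm_iter_diff_end_le) auto
  also have "\<dots> = (\<Sum>i<n. (l * \<alpha>) * norm (root_tail p (Suc i))
      + (l * \<alpha> * l * R) * d i + l * \<alpha> * l * \<alpha> * tail_mass p)"
    by (simp add: algebra_simps)
  also have "\<dots> = l * \<alpha> * tail_mass p + real n * l * \<alpha> * l * \<alpha> * tail_mass p
      + l * \<alpha> * l * R * (\<Sum>i<n. d i)"
    by (simp only: sum.distrib flip: sum_distrib_left) (simp add: tail_mass_def)
  finally show ?thesis by (simp add: R_def d_def)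
qed

lemma norm_epoch_error_le:
  "\<alpha> * norm (\<Sum>i<n. \<omega> (p i) (iter (Suc i)) - \<omega> (p i) (iter n))
    \<le> n * \<alpha> * \<mu> / 8 * norm (z - zs) + 49/40 * l * \<alpha>\<^sup>2 * tail_mass p"
proof -
  define r where "r = norm (z - zs)"
  define A where "A = (\<Sum>i<n. norm (iter (Suc i) - zs))"
  define S where "S = (\<Sum>i<n. real (n - Suc i))"
  define b where "b = \<alpha> * l * n"
  define X where "X = l * \<alpha>\<^sup>2 * tail_mass p"
  have nonneg: "r \<ge> 0" "A \<ge> 0" "b \<ge> 0" "X \<ge> 0"
    using alpha_pos l_pos tail_mass_nonneg by (auto simp: r_def A_def b_def X_def sum_nonneg)
  have "S \<ge> 0"
    unfolding S_def by (rule sum_nonneg) (rule of_nat_0_le_iff)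
  have b: "b \<le> 1/5" "b\<^sup>2 \<le> n * \<alpha> * \<mu> / 5"
    using alpha_l_n_le alpha_l_n_sq_le by (simp_all add: b_def)
  have "\<alpha> * norm (\<Sum>i<n. \<omega> (p i) (iter (Suc i)) - \<omega> (p i) (iter n))
      \<le> \<alpha> * (l * \<alpha> * tail_mass p + real n * l * \<alpha> * l * \<alpha> * tail_mass p
        + l * \<alpha> * l * (r + \<alpha> * l * A) * S)"
    unfolding r_def A_def S_def using norm_epoch_error_le_tails alpha_pos by (intro mult_left_mono) auto
  also have "\<dots> = X + (\<alpha> * l)\<^sup>2 * S * (r + \<alpha> * l * A) + b * X"
    by (simp add: X_def b_def power2_eq_square algebra_simps)
  also have "\<dots> \<le> X + b\<^sup>2 / 2 * (r + 5/4 * (b * r + X)) + b * X"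
  proof -
    have "(\<alpha> * l)\<^sup>2 * S \<le> (\<alpha> * l)\<^sup>2 * ((real n)\<^sup>2 / 2)"
      unfolding S_def by (intro mult_left_mono sum_diff_Suc_le) auto
    then have "(\<alpha> * l)\<^sup>2 * S \<le> b\<^sup>2 / 2"
      by (simp add: b_def power_mult_distrib)
    moreover have "\<alpha> * l * A \<le> 5/4 * (b * r + X)"
      using mult_left_mono[OF sum_norm_iter_diff_root_le, of "\<alpha> * l"] alpha_pos l_pos
      by (simp add: A_def r_def b_def X_def power2_eq_square algebra_simps)
    ultimately have "(\<alpha> * l)\<^sup>2 * S * (r + \<alpha> * l * A) \<le> b\<^sup>2 / 2 * (r + 5/4 * (b * r + X))"
      using nonneg \<open>S \<ge> 0\<close> alpha_pos l_pos by (intro mult_mono) auto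
    then show ?thesis by simp
  qed
  also have "\<dots> = X + 1/2 * (b\<^sup>2 * r) + 5/8 * (b\<^sup>2 * b * r) + 5/8 * (b\<^sup>2 * X) + b * X"
    by (simp add: field_simps)
  also have "\<dots> \<le> n * \<alpha> * \<mu> / 8 * r + 49/40 * X"
  proof -
    have "b\<^sup>2 * b * r \<le> b\<^sup>2 * (1/5) * r"
      using b nonneg by (intro mult_right_mono mult_left_mono) auto
    moreover have "b\<^sup>2 * X \<le> (1/5)\<^sup>2 * X"
      using b nonneg by (intro mult_right_mono power_mono) auto
    moreover have "b * X \<le> 1/5 * X"
      using b nonneg by (intro mult_right_mono) auto
    moreover have "b\<^sup>2 * r \<le> n * \<alpha> * \<mu> / 5 * r"
      using mult_right_mono[OF b(2) nonneg(1)] .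
    ultimately show ?thesis by (simp add: power2_eq_square algebra_simps)
  qed
  finally show ?thesis by (simp add: r_def X_def mult_ac)
qed

lemma epoch_dist_sq_le:
  "(norm (iter n - zs))\<^sup>2 \<le> exp (- (n * \<alpha> * \<mu>)) * (norm (z - zs))\<^sup>2 + epoch_noise p"
proof -
  define E where "E = (\<Sum>i<n. \<omega> (p i) (iter (Suc i)) - \<omega> (p i) (iter n))"
  define q where "q = n * \<alpha> * \<mu>"
  define W where "W = 49/40 * l * \<alpha>\<^sup>2 * tail_mass p"
  have "z - iter n = \<alpha> *\<^sub>R (\<Sum>i<n. \<omega> (p i) (iter (Suc i)))"
    using iter_diff[of 0 n] by (simp add: atLeast0LessThan)
  moreover have "(\<Sum>i<n. \<omega> (p i) (iter (Suc i))) = real n *\<^sub>R nu n \<omega> (iter n) + E"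
    using sum_perms_apply[OF p, of "\<lambda>a. \<omega> a (iter n)"] n_pos by (simp add: E_def nu_def sum_subtractf)
  ultimately have decomp: "(z - zs) - \<alpha> *\<^sub>R E = (iter n - zs) + (\<alpha> * n) *\<^sub>R nu n \<omega> (iter n)"
    by (simp add: algebra_simps)
  have mono: "inner (nu n \<omega> (iter n)) (iter n - zs) \<ge> \<mu> * (norm (iter n - zs))\<^sup>2"
    using nu_strongly_monotone nu_root unfolding strongly_monotone_def by (metis diff_zero)
  have "norm (\<alpha> *\<^sub>R E) \<le> q/8 * norm (z - zs) + W"
    using norm_epoch_error_le alpha_pos by (simp add: E_def q_def W_def)
  then have "(norm (iter n - zs))\<^sup>2 \<le> exp (- q) * (norm (z - zs))\<^sup>2 + 20 / (7*q) * W\<^sup>2"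
    using alpha_pos n_pos mu_pos n_alpha_mu_le l_pos tail_mass_nonneg
    by (intro perturbed_monotone_step[OF decomp mono]) (auto simp: q_def W_def)
  also have "20 / (7*q) * W\<^sup>2 = 2401/560 * l\<^sup>2 * \<alpha>^3 / (real n * \<mu>) * (tail_mass p)\<^sup>2"
    using alpha_pos n_pos mu_pos by (simp add: q_def W_def power2_eq_square power3_eq_cube field_simps)
  also have "\<dots> \<le> epoch_noise p"
    unfolding epoch_noise_def using alpha_pos n_pos mu_pos
    by (intro mult_right_mono divide_right_mono) auto
  finally show ?thesis by (simp add: q_def)
qed

end

lemma epoch_noise_nonneg: "epoch_noise p \<ge> 0"
  using alpha_pos mu_pos by (simp add: epoch_noise_def)

lemma ppm_run_dist_sq_le:
  assumes \<tau>: "\<And>j. j \<in> {1..k} \<Longrightarrow> \<tau> j \<in> perms n"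
  shows "(norm (ppm_run n \<alpha> \<omega> \<tau> k z0 - zs))\<^sup>2
    \<le> exp (- (n * \<alpha> * \<mu> * k)) * (norm (z0 - zs))\<^sup>2 + (\<Sum>j\<in>{1..k}. epoch_noise (\<tau> j))"
proof -
  have "(norm (ppm_run n \<alpha> \<omega> \<tau> k z0 - zs))\<^sup>2
      \<le> exp (- (n * \<alpha> * \<mu>)) ^ k * (norm (ppm_run n \<alpha> \<omega> \<tau> 0 z0 - zs))\<^sup>2 + (\<Sum>j\<in>{1..k}. epoch_noise (\<tau> j))"
  proof (rule iterate_contraction_noise)
    fix j assume "j < k"
    then show "(norm (ppm_run n \<alpha> \<omega> \<tau> (Suc j) z0 - zs))\<^sup>2
        \<le> exp (- (n * \<alpha> * \<mu>)) * (norm (ppm_run n \<alpha> \<omega> \<tau> j z0 - zs))\<^sup>2 + epoch_noise (\<tau> (Suc j))"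
      using epoch_dist_sq_le[OF \<tau>] by (simp add: ppm_epoch_eq_iterate)
  qed (use alpha_pos mu_pos epoch_noise_nonneg in auto)
  then show ?thesis
    by (simp add: exp_of_nat_mult[symmetric] mult_ac)
qed

lemma mean_epoch_noise_le:
  "(\<Sum>p\<in>perms n. epoch_noise p) / real (card (perms n))
    \<le> l\<^sup>2 * sigma_star_sq n \<omega> zs * \<alpha>^3 * (real n)\<^sup>2 / \<mu>"
proof -
  define \<sigma> where "\<sigma> = sigma_star_sq n \<omega> zs"
  have \<sigma>: "\<sigma> \<ge> 0" by (simp add: \<sigma>_def sigma_star_sq_def sum_nonneg)
  have N: "real (card (perms n)) > 0" by (simp add: card_perms)
  have "(\<Sum>p\<in>perms n. epoch_noise p)
      = 43/10 * l\<^sup>2 * \<alpha>^3 / (real n * \<mu>) * (\<Sum>p\<in>perms n. (tail_mass p)\<^sup>2)"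
    by (simp add: epoch_noise_def sum_distrib_left)
  also have "\<dots> \<le> 43/10 * l\<^sup>2 * \<alpha>^3 / (real n * \<mu>) * (real (card (perms n)) * \<sigma> * (real n ^ 3 - real n) / 6)"
    unfolding \<sigma>_def using alpha_pos mu_pos
    by (intro mult_left_mono sum_perms_tail_mass_sq_le) auto
  also have "\<dots> = real (card (perms n)) * (l\<^sup>2 * \<sigma> * \<alpha>^3 * (43/60 * ((real n)\<^sup>2 - 1)) / \<mu>)"
    using n_pos mu_pos by (simp add: power2_eq_square power3_eq_cube field_simps)
  also have "\<dots> \<le> real (card (perms n)) * (l\<^sup>2 * \<sigma> * \<alpha>^3 * (real n)\<^sup>2 / \<mu>)"
  proof -
    have "43/60 * ((real n)\<^sup>2 - 1) \<le> (real n)\<^sup>2"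
      using zero_le_power2[of "real n"] by (simp add: algebra_simps)
    then show ?thesis
      using N \<sigma> alpha_pos mu_pos by (intro mult_left_mono divide_right_mono) auto
  qed
  finally show ?thesis
    using N by (simp add: \<sigma>_def divide_le_eq mult.commute)
qed

lemma E_RR_le:
  "E_RR n \<alpha> \<omega> K z0 zs
    \<le> exp (- (n * \<alpha> * \<mu> * K)) * (norm (z0 - zs))\<^sup>2 + K * (l\<^sup>2 * sigma_star_sq n \<omega> zs * \<alpha>^3 * (real n)\<^sup>2 / \<mu>)"
proof -
  define Taus where "Taus = PiE {1..K} (\<lambda>_. perms n)"
  define C where "C = exp (- (n * \<alpha> * \<mu> * K)) * (norm (z0 - zs))\<^sup>2"
  have Taus: "real (card Taus) > 0" by (simp add: Taus_def card_PiE card_perms)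
  have "E_RR n \<alpha> \<omega> K z0 zs \<le> (\<Sum>\<tau>\<in>Taus. C + (\<Sum>j\<in>{1..K}. epoch_noise (\<tau> j))) / real (card Taus)"
    unfolding E_RR_def Taus_def[symmetric] C_def
    by (intro divide_right_mono sum_mono ppm_run_dist_sq_le) (auto simp: Taus_def)
  also have "\<dots> = C + (\<Sum>j\<in>{1..K}. (\<Sum>\<tau>\<in>Taus. epoch_noise (\<tau> j)) / real (card Taus))"
    using Taus by (simp add: sum.distrib sum.swap[of _ Taus] add_divide_distrib sum_divide_distrib)
  also have "\<dots> = C + K * ((\<Sum>p\<in>perms n. epoch_noise p) / real (card (perms n)))"
    by (simp add: Taus_def sum_PiE_perms_apply)
  also have "\<dots> \<le> C + K * (l\<^sup>2 * sigma_star_sq n \<omega> zs * \<alpha>^3 * (real n)\<^sup>2 / \<mu>)"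
    by (intro add_left_mono mult_left_mono mean_epoch_noise_le) auto
  finally show ?thesis by (simp add: C_def)
qed

lemma E_SO_le:
  "E_SO n \<alpha> \<omega> K z0 zs
    \<le> exp (- (n * \<alpha> * \<mu> * K)) * (norm (z0 - zs))\<^sup>2 + K * (l\<^sup>2 * sigma_star_sq n \<omega> zs * \<alpha>^3 * (real n)\<^sup>2 / \<mu>)"
proof -
  define C where "C = exp (- (n * \<alpha> * \<mu> * K)) * (norm (z0 - zs))\<^sup>2"
  have N: "real (card (perms n)) > 0" by (simp add: card_perms)
  have "E_SO n \<alpha> \<omega> K z0 zs \<le> (\<Sum>p\<in>perms n. C + K * epoch_noise p) / real (card (perms n))"
    unfolding E_SO_def C_def
    by (intro divide_right_mono sum_mono order_trans[OF ppm_run_dist_sq_le]) auto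
  also have "\<dots> = C + K * ((\<Sum>p\<in>perms n. epoch_noise p) / real (card (perms n)))"
    using N by (simp add: sum.distrib add_divide_distrib sum_divide_distrib sum_distrib_left)
  also have "\<dots> \<le> C + K * (l\<^sup>2 * sigma_star_sq n \<omega> zs * \<alpha>^3 * (real n)\<^sup>2 / \<mu>)"
    by (intro add_left_mono mult_left_mono mean_epoch_noise_le) auto
  finally show ?thesis by (simp add: C_def)
qed

lemma ppm_mean_sq_dist_le:
  fixes K :: nat and z0 :: 'a
  defines "R \<equiv> 2 * exp (- (real n * \<alpha> * \<mu> * real K)) * (norm (z0 - zs))\<^sup>2
    + l\<^sup>2 * sigma_star_sq n \<omega> zs * \<alpha>^3 * (real n)\<^sup>2 * real K / \<mu>"
  shows "E_RR n \<alpha> \<omega> K z0 zs \<le> R" and "E_SO n \<alpha> \<omega> K z0 zs \<le> R"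
proof -
  have "exp (- (n * \<alpha> * \<mu> * K)) * (norm (z0 - zs))\<^sup>2
      + K * (l\<^sup>2 * sigma_star_sq n \<omega> zs * \<alpha>^3 * (real n)\<^sup>2 / \<mu>) \<le> R"
    by (simp add: R_def mult_ac)
  then show "E_RR n \<alpha> \<omega> K z0 zs \<le> R" and "E_SO n \<alpha> \<omega> K z0 zs \<le> R"
    using E_RR_le E_SO_le by (blast intro: order_trans)+
qed

end

context strongly_monotone_finite_sum
begin

lemma tuned_step_size_bound:
  fixes K :: nat and L \<alpha> :: real
  assumes K: "K \<ge> 1" and X: "norm (nu n \<omega> z0) * sqrt (real n) * real K / \<mu> > 1"
    and L_def: "L = ln (norm (nu n \<omega> z0) * sqrt (real n) * real K / \<mu>)"
    and \<alpha>_def: "\<alpha> = min (\<mu> / (5 * real n * l\<^sup>2)) (2 * L / (\<mu> * real n * real K))"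
  shows "0 < \<alpha>" and "\<alpha> \<le> \<mu> / (5 * real n * l\<^sup>2)"
    and "2 * exp (- (real n * \<alpha> * \<mu> * real K)) * (norm (z0 - zs))\<^sup>2
          + l\<^sup>2 * sigma_star_sq n \<omega> zs * \<alpha>^3 * (real n)\<^sup>2 * real K / \<mu>
        \<le> 2 * exp (- (real K / (5 * (l / \<mu>)\<^sup>2))) * (norm (z0 - zs))\<^sup>2
          + (2 * \<mu>\<^sup>2 + 8 * (l / \<mu>)\<^sup>2 * sigma_star_sq n \<omega> zs * L^3) / (\<mu>\<^sup>2 * real n * (real K)\<^sup>2)"
proof -
  define X where "X = norm (nu n \<omega> z0) * sqrt (real n) * real K / \<mu>"
  define \<sigma> where "\<sigma> = sigma_star_sq n \<omega> zs"
  define r where "r = norm (z0 - zs)"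
  have L: "L > 0" using X by (simp add: L_def)
  have nK: "real n > 0" "real K > 0" using n_pos K by auto
  have \<sigma>: "\<sigma> \<ge> 0" by (simp add: \<sigma>_def sigma_star_sq_def sum_nonneg)
  show \<alpha>: "0 < \<alpha>" using mu_pos l_pos L nK by (simp add: \<alpha>_def)
  show "\<alpha> \<le> \<mu> / (5 * real n * l\<^sup>2)" by (simp add: \<alpha>_def)
  have "l\<^sup>2 * \<sigma> * \<alpha>^3 * (real n)\<^sup>2 * real K / \<mu>
      \<le> l\<^sup>2 * \<sigma> * (2 * L / (\<mu> * real n * real K))^3 * (real n)\<^sup>2 * real K / \<mu>"
    using \<alpha> \<sigma> mu_pos nK
    by (intro divide_right_mono mult_right_mono mult_left_mono power_mono) (auto simp: \<alpha>_def)
  also have "\<dots> = 8 * (l / \<mu>)\<^sup>2 * \<sigma> * L^3 / (\<mu>\<^sup>2 * real n * (real K)\<^sup>2)"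
    using mu_pos nK by (simp add: power2_eq_square power3_eq_cube field_simps)
  finally have variance: "l\<^sup>2 * \<sigma> * \<alpha>^3 * (real n)\<^sup>2 * real K / \<mu>
      \<le> 8 * (l / \<mu>)\<^sup>2 * \<sigma> * L^3 / (\<mu>\<^sup>2 * real n * (real K)\<^sup>2)" .
  have bias: "2 * exp (- (real n * \<alpha> * \<mu> * real K)) * r\<^sup>2
      \<le> 2 * exp (- (real K / (5 * (l / \<mu>)\<^sup>2))) * r\<^sup>2 + 2 * \<mu>\<^sup>2 / (\<mu>\<^sup>2 * real n * (real K)\<^sup>2)"
  proof (cases "\<alpha> = \<mu> / (5 * real n * l\<^sup>2)")
    case True
    then have "real n * \<alpha> * \<mu> * real K = real K / (5 * (l / \<mu>)\<^sup>2)"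
      using mu_pos l_pos nK by (simp add: power2_eq_square field_simps)
    then show ?thesis using nK by simp
  next
    case False
    then have "real n * \<alpha> * \<mu> * real K = 2 * L"
      using mu_pos nK by (simp add: \<alpha>_def min_def split: if_splits)
    moreover have "exp (2 * L) = X\<^sup>2"
      using exp_of_nat_mult[of 2 L] X by (simp add: L_def X_def)
    ultimately have "2 * exp (- (real n * \<alpha> * \<mu> * real K)) * r\<^sup>2 = 2 * r\<^sup>2 / X\<^sup>2"
      by (simp add: exp_minus field_simps)
    also have "\<dots> \<le> 2 / (real n * (real K)\<^sup>2)"
    proof -
      have "(\<mu> * r)\<^sup>2 \<le> (norm (nu n \<omega> z0))\<^sup>2"
        using mu_norm_diff_root_le[of z0] mu_pos by (intro power_mono) (auto simp: r_def)
      then have "\<mu>\<^sup>2 * r\<^sup>2 * (real n * (real K)\<^sup>2) \<le> \<mu>\<^sup>2 * X\<^sup>2"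
        using mu_pos nK by (simp add: X_def power_mult_distrib power_divide field_simps)
      then show ?thesis
        using X mu_pos nK unfolding X_def[symmetric] by (simp add: field_simps)
    qed
    also have "\<dots> = 2 * \<mu>\<^sup>2 / (\<mu>\<^sup>2 * real n * (real K)\<^sup>2)"
      using mu_pos by simp
    finally show ?thesis
      by (smt (verit) exp_ge_zero mult_nonneg_nonneg zero_le_power2)
  qed
  show "2 * exp (- (real n * \<alpha> * \<mu> * real K)) * (norm (z0 - zs))\<^sup>2
          + l\<^sup>2 * sigma_star_sq n \<omega> zs * \<alpha>^3 * (real n)\<^sup>2 * real K / \<mu>
        \<le> 2 * exp (- (real K / (5 * (l / \<mu>)\<^sup>2))) * (norm (z0 - zs))\<^sup>2
          + (2 * \<mu>\<^sup>2 + 8 * (l / \<mu>)\<^sup>2 * sigma_star_sq n \<omega> zs * L^3) / (\<mu>\<^sup>2 * real n * (real K)\<^sup>2)"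
    using variance bias by (simp add: \<sigma>_def r_def add_divide_distrib)
qed

end

theorem theorem1:
  fixes \<omega> :: "nat \<Rightarrow> 'a::euclidean_space \<Rightarrow> 'a"
    and n :: nat and l \<mu> :: real and zs z0 :: 'a
  assumes n: "n \<ge> 1"
    and lip: "\<And>i. i < n \<Longrightarrow> l-lipschitz_on UNIV (\<omega> i)"
    and mu_pos: "\<mu> > 0"
    and smon: "strongly_monotone \<mu> (nu n \<omega>)"
    and root: "nu n \<omega> zs = 0"
  shows
    "(\<forall>\<alpha> K::nat. 0 < \<alpha> \<and> \<alpha> \<le> \<mu> / (5 * real n * l\<^sup>2) \<and> K \<ge> 1 \<longrightarrow>
        prox_well_defined n \<alpha> \<omega> \<and>
        E_RR n \<alpha> \<omega> K z0 zs \<le> 2 * exp (- (real n * \<alpha> * \<mu> * real K)) * (norm (z0 - zs))\<^sup>2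
            + l\<^sup>2 * sigma_star_sq n \<omega> zs * \<alpha>^3 * (real n)\<^sup>2 * real K / \<mu> \<and>
        E_SO n \<alpha> \<omega> K z0 zs \<le> 2 * exp (- (real n * \<alpha> * \<mu> * real K)) * (norm (z0 - zs))\<^sup>2
            + l\<^sup>2 * sigma_star_sq n \<omega> zs * \<alpha>^3 * (real n)\<^sup>2 * real K / \<mu>)
     \<and>
     (\<forall>K::nat. K \<ge> 1 \<and> norm (nu n \<omega> z0) * sqrt (real n) * real K / \<mu> > 1 \<longrightarrow>
        (let L = ln (norm (nu n \<omega> z0) * sqrt (real n) * real K / \<mu>);
             \<alpha> = min (\<mu> / (5 * real n * l\<^sup>2)) (2 * L / (\<mu> * real n * real K));
             \<kappa> = l / \<mu>;
             B = 2 * exp (- (real K / (5 * \<kappa>\<^sup>2))) * (norm (z0 - zs))\<^sup>2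
                 + (2 * \<mu>\<^sup>2 + 8 * \<kappa>\<^sup>2 * sigma_star_sq n \<omega> zs * L^3) / (\<mu>\<^sup>2 * real n * (real K)\<^sup>2)
         in prox_well_defined n \<alpha> \<omega> \<and> E_RR n \<alpha> \<omega> K z0 zs \<le> B \<and> E_SO n \<alpha> \<omega> K z0 zs \<le> B))"
proof -
  interpret strongly_monotone_finite_sum \<omega> n l \<mu> zs
    by unfold_locales (use assms in auto)
  show ?thesis
    apply (rule conjI; intro allI impI)
    subgoal premises step for \<alpha> K
    proof -
      interpret ppm_step \<omega> n l \<mu> zs \<alpha>
        using step by unfold_locales auto
      show ?thesis using prox_well_defined ppm_mean_sq_dist_le by blast
    qed
    subgoal premises K for K
    proof -
      define L where "L = ln (norm (nu n \<omega> z0) * sqrt (real n) * real K / \<mu>)"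
      define \<alpha> where "\<alpha> = min (\<mu> / (5 * real n * l\<^sup>2)) (2 * L / (\<mu> * real n * real K))"
      note tuned = tuned_step_size_bound[of K z0 L \<alpha>, OF _ _ L_def \<alpha>_def]
      interpret ppm_step \<omega> n l \<mu> zs \<alpha>
        using tuned K by unfold_locales auto
      show ?thesis
        unfolding Let_def L_def[symmetric] \<alpha>_def[symmetric]
        using prox_well_defined ppm_mean_sq_dist_le tuned K by (blast intro: order_trans)
    qed
    done
qed

end
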